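(* Assume (R) and (F), let $\alpha\in(0,\infty)^T$, and let $Z\in L^\infty$ have the representation $Z=\sum_{t=1}^T z_t1_{(t-1<\tau\le t)}+z_{T+1}1_{(T<\tau)}$ with real constants $z_1,\dots,z_{T+1}$. Then $L_1(\alpha,-Z)=e^{\beta_1z_1}D_1+h_1^{\beta_1}(1-D_1)$ and, for $t=2,\dots,T$, $L_t(\alpha,-Z)=\exp\Big[\beta_t\sum_{s=1}^{t-1}(z_s-z_{s+1})D_s\Big]\cdot\big[e^{\beta_tz_t}D_t+h_t^{\beta_t}(1-D_t)\big]$.
   Context: Let $T\ge1$, $\mathbb{T}=\{1,\dots,T\}$, and $(\Omega,\mathcal{F},P)$ a probability space carrying a random variable $\tau$ with $\tau(\omega)>0$ for all $\omega$ and $P(\tau=s)=0$ for all $s\in[0,\infty)$ (the future lifetime of an insured). Let $D_t=1_{(\tau\le t)}$ for $t=0,\dots,T$ and $\mathcal{H}_t=\sigma(D_s:s=0,\dots,t)$. Condition (F): the filtration is $\mathcal{F}_t=\mathcal{H}_t$, $t=0,\dots,T$; $L^\infty=L^\infty(\Omega,\mathcal{F}_T,P)$ and $E_t[Y]=E[Y\mid\mathcal{F}_t]$. Condition (R): the interest rates $r_t\ge0$ are deterministic (so $B_t=\prod_{k=1}^t(1+r_k)$ is deterministic). Let $q_t=P(\tau\le t+1\mid\tau>t)$ and $p_t=1-q_t$ for $t=0,\dots,T-1$. For $\alpha\in(0,\infty)^T$ define $\beta_t$ by $1/\beta_t=\sum_{k=t}^T 1/\alpha_k$. For $W\in L^\infty$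 define $L_T(\alpha,W)=\exp(-\alpha_T W)$ and $L_{t-1}(\alpha,W)=E_{t-1}[L_t(\alpha,W)]^{\beta_{t-1}/\beta_t}$ for $t=2,\dots,T$. Given $z_1,\dots,z_{T+1}$, define the deterministic numbers $h_T=e^{z_{T+1}}$ and $h_{t-1}=\big[e^{\beta_tz_t}q_{t-1}+h_t^{\beta_t}p_{t-1}\big]^{1/\beta_t}$ for $t=1,\dots,T$. *)

theory Defs
  imports "HOL-Probability.Probability"
begin

definition Dind :: "('a \<Rightarrow> real) \<Rightarrow> nat \<Rightarrow> 'a \<Rightarrow> real" where
  "Dind \<tau> t \<omega> = (if \<tau> \<omega> \<le> real t then 1 else 0)"

definition Hfilt :: "'a measure \<Rightarrow> ('a \<Rightarrow> real) \<Rightarrow> nat \<Rightarrow> 'a measure" where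
  "Hfilt M \<tau> t = sigma (space M)
     (\<Union>s\<in>{0..t}. {Dind \<tau> s -` A \<inter> space M | A. A \<in> sets borel})"

definition betaT :: "nat \<Rightarrow> (nat \<Rightarrow> real) \<Rightarrow> nat \<Rightarrow> real" where
  "betaT T \<alpha> t = 1 / (\<Sum>k\<in>{t..T}. 1 / \<alpha> k)"

text \<open>Backward recursion: Lback n = L_{T-n}(alpha, W).\<close>
fun Lback :: "'a measure \<Rightarrow> ('a \<Rightarrow> real) \<Rightarrow> nat \<Rightarrow> (nat \<Rightarrow> real) \<Rightarrow> ('a \<Rightarrow> real)
    \<Rightarrow> nat \<Rightarrow> 'a \<Rightarrow> real" where
  "Lback M \<tau> T \<alpha> W 0 = (\<lambda>\<omega>. exp (- \<alpha> T * W \<omega>))"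
| "Lback M \<tau> T \<alpha> W (Suc n) =
     (\<lambda>\<omega>. real_cond_exp M (Hfilt M \<tau> (T - Suc n)) (Lback M \<tau> T \<alpha> W n) \<omega>
            powr (betaT T \<alpha> (T - Suc n) / betaT T \<alpha> (T - n)))"

definition Lfun :: "'a measure \<Rightarrow> ('a \<Rightarrow> real) \<Rightarrow> nat \<Rightarrow> (nat \<Rightarrow> real) \<Rightarrow> ('a \<Rightarrow> real)
    \<Rightarrow> nat \<Rightarrow> 'a \<Rightarrow> real" where
  "Lfun M \<tau> T \<alpha> W t = Lback M \<tau> T \<alpha> W (T - t)"

definition qdeath :: "'a measure \<Rightarrow> ('a \<Rightarrow> real) \<Rightarrow> nat \<Rightarrow> real" where
  "qdeath M \<tau> t = cond_prob M (\<lambda>\<omega>. \<tau> \<omega> \<le> real t + 1) (\<lambda>\<omega>. \<tau> \<omega> > real t)"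

definition psurv :: "'a measure \<Rightarrow> ('a \<Rightarrow> real) \<Rightarrow> nat \<Rightarrow> real" where
  "psurv M \<tau> t = 1 - qdeath M \<tau> t"

text \<open>Backward recursion: hback n = h_{T-n}.\<close>
fun hback :: "'a measure \<Rightarrow> ('a \<Rightarrow> real) \<Rightarrow> nat \<Rightarrow> (nat \<Rightarrow> real) \<Rightarrow> (nat \<Rightarrow> real)
    \<Rightarrow> nat \<Rightarrow> real" where
  "hback M \<tau> T \<alpha> z 0 = exp (z (T + 1))"
| "hback M \<tau> T \<alpha> z (Suc n) =
     (exp (betaT T \<alpha> (T - n) * z (T - n)) * qdeath M \<tau> (T - Suc n)
      + hback M \<tau> T \<alpha> z n powr betaT T \<alpha> (T - n) * psurv M \<tau> (T - Suc n))
     powr (1 / betaT T \<alpha> (T - n))"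

definition hfun :: "'a measure \<Rightarrow> ('a \<Rightarrow> real) \<Rightarrow> nat \<Rightarrow> (nat \<Rightarrow> real) \<Rightarrow> (nat \<Rightarrow> real)
    \<Rightarrow> nat \<Rightarrow> real" where
  "hfun M \<tau> T \<alpha> z t = hback M \<tau> T \<alpha> z (T - t)"

end

theory Submission
  imports Defs
begin

(*
  Call a random variable a lifetime function of horizon n if it
  has the form  X = f(k) on {k-1 < tau <= k}, k = 1..n, and X = c on {n < tau}.
  The terminal value L_T(alpha,-Z) = exp(alpha_T Z) is such a function of
  horizon T, and the induction backwards in time rests on one computation:
  conditioning a lifetime function of horizon m+1 on H_m gives a lifetime
  function of horizon m, with the same death payments f(1..m) and the new
  survival value  f(m+1) q_m + c p_m  (the sigma-algebra H_m only sees whether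
  the insured is dead by m and if so when; on {m < tau} it is trivial).
  Raising to a power acts pointwise on payments and survival value, which
  reproduces the recursion for h_t.  Hence L_t(alpha,-Z) is the lifetime
  function of horizon t with payments exp(beta_t z_s) and survival value
  h_t^beta_t; rewriting it with the indicators D_s gives both claims.
*)

section \<open>Lifetime functions\<close>

text \<open>The payoff of a contract that pays f k on death in (k-1,k], k <= n,
  and c on survival to n, as a function of the lifetime x.\<close>
definition lifetime_fun :: "nat \<Rightarrow> (nat \<Rightarrow> real) \<Rightarrow> real \<Rightarrow> real \<Rightarrow> real" where
  "lifetime_fun n f c x = (if x \<le> real n then f (nat \<lceil>x\<rceil>) else c)"

lemma nat_ceiling_eq_period:
  fixes x :: real
  assumes "real k - 1 < x" "x \<le> real k"
  shows "nat \<lceil>x\<rceil> = k"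
proof -
  have "\<lceil>x\<rceil> = int k" using assms by (simp add: ceiling_eq_iff)
  then show ?thesis by simp
qed

text \<open>Representation of a lifetime function as a linear combination of the
  death indicators; this is what makes it measurable for the filtration.\<close>
lemma lifetime_fun_indicators:
  fixes x :: real
  assumes "x > 0"
  shows "lifetime_fun n f c x =
    (\<Sum>s\<in>{1..n}. f s * ((if x \<le> real s then 1 else 0) - (if x \<le> real (s - 1) then 1 else 0)))
    + c * (1 - (if x \<le> real n then 1 else 0))"
proof (induction n)
  case 0
  then show ?case using assms by (simp add: lifetime_fun_def)
next
  case (Suc n)
  show ?case
  proof (cases "x \<le> real n")
    case True
    then show ?thesis using Suc.IH by (simp add: sum.cl_ivl_Suc lifetime_fun_def)
  next
    case False
    then show ?thesis
      using Suc.IH nat_ceiling_eq_period[of "Suc n" x]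
      by (auto simp add: sum.cl_ivl_Suc algebra_simps lifetime_fun_def)
  qed
qed

lemma death_differences_telescope:
  fixes x :: real and z :: "nat \<Rightarrow> real"
  assumes "x > 0"
  shows "(\<Sum>s\<in>{1..n}. (z s - z (s + 1)) * (if x \<le> real s then 1 else 0))
     = (if x \<le> real n then z (nat \<lceil>x\<rceil>) - z (n + 1) else 0)"
proof (induction n)
  case 0
  then show ?case using assms by simp
next
  case (Suc n)
  show ?case
  proof (cases "x \<le> real n")
    case True
    then show ?thesis using Suc.IH by (simp add: sum.cl_ivl_Suc)
  next
    case False
    then show ?thesis
      using Suc.IH nat_ceiling_eq_period[of "Suc n" x] by (auto simp add: sum.cl_ivl_Suc)
  qed
qed

lemma lifetime_fun_powr:
  "lifetime_fun n f c x powr r = lifetime_fun n (\<lambda>s. f s powr r) (c powr r) x"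
  by (simp add: lifetime_fun_def)

lemma lifetime_fun_exp_factorization:
  fixes x b c :: real and z :: "nat \<Rightarrow> real"
  assumes "x > 0" "t \<ge> 1"
  shows "lifetime_fun t (\<lambda>s. exp (b * z s)) c x =
    exp (b * (\<Sum>s\<in>{1..t - 1}. (z s - z (s + 1)) * (if x \<le> real s then 1 else 0)))
    * (exp (b * z t) * (if x \<le> real t then 1 else 0) + c * (1 - (if x \<le> real t then 1 else 0)))"
proof -
  have tel: "(\<Sum>s\<in>{1..t - 1}. (z s - z (s + 1)) * (if x \<le> real s then 1 else 0))
      = (if x \<le> real t - 1 then z (nat \<lceil>x\<rceil>) - z t else 0)"
    using death_differences_telescope[OF assms(1), of z "t - 1"] assms(2) by (simp add: of_nat_diff)
  consider "x \<le> real t - 1" | "real t - 1 < x" "x \<le> real t" | "real t < x" by linarith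
  then show ?thesis
  proof cases
    case 1
    have "exp (b * (z (nat \<lceil>x\<rceil>) - z t)) * exp (b * z t) = exp (b * z (nat \<lceil>x\<rceil>))"
      by (simp add: mult_exp_exp algebra_simps)
    then show ?thesis using 1 unfolding tel by (simp add: lifetime_fun_def)
  next
    case 2
    then show ?thesis using nat_ceiling_eq_period[of t x] unfolding tel by (simp add: lifetime_fun_def)
  qed (unfold tel, simp add: lifetime_fun_def)
qed

lemma payoff_lifetime_fun:
  fixes \<tau> :: "'a \<Rightarrow> real"
  assumes "\<tau> \<omega> > 0"
  shows "(\<Sum>t\<in>{1..T}. z t * indicator {\<omega>'. real t - 1 < \<tau> \<omega>' \<and> \<tau> \<omega>' \<le> real t} \<omega>)
      + z (T + 1) * indicator {\<omega>'. real T < \<tau> \<omega>'} \<omega> = lifetime_fun T z (z (T + 1)) (\<tau> \<omega>)"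
proof -
  have "(\<Sum>t\<in>{1..T}. z t * indicator {\<omega>'. real t - 1 < \<tau> \<omega>' \<and> \<tau> \<omega>' \<le> real t} \<omega>)
      = (\<Sum>t\<in>{1..T}. z t * ((if \<tau> \<omega> \<le> real t then 1 else 0) - (if \<tau> \<omega> \<le> real (t - 1) then 1 else 0)))"
    by (rule sum.cong) (auto simp: of_nat_diff indicator_def)
  then show ?thesis
    by (simp add: lifetime_fun_indicators[OF assms] indicator_def not_less)
qed

section \<open>The filtration generated by the death indicators\<close>

lemma Hfilt_space [simp]: "space (Hfilt M \<tau> t) = space M"
  by (simp add: Hfilt_def space_measure_of_conv)

lemma sets_Hfilt: "sets (Hfilt M \<tau> t) = sigma_sets (space M)
     (\<Union>s\<in>{0..t}. {Dind \<tau> s -` A \<inter> space M | A. A \<in> sets borel})"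
  unfolding Hfilt_def by (rule sets_measure_of) auto

lemma Dind_measurable:
  assumes "\<tau> \<in> borel_measurable M"
  shows "Dind \<tau> s \<in> borel_measurable M"
proof -
  have "{x\<in>space M. \<tau> x \<le> real s} \<in> sets M"
    using assms unfolding borel_measurable_iff_le by blast
  then show ?thesis unfolding Dind_def by (intro measurable_If measurable_const) auto
qed

lemma Dind_measurable_Hfilt:
  assumes "s \<le> t"
  shows "Dind \<tau> s \<in> borel_measurable (Hfilt M \<tau> t)"
proof (rule measurableI)
  fix A :: "real set" assume "A \<in> sets borel"
  then have "Dind \<tau> s -` A \<inter> space M \<in> {Dind \<tau> s -` A \<inter> space M | A. A \<in> sets borel}"
    by blast
  then have "Dind \<tau> s -` A \<inter> space M \<in>
      (\<Union>s\<in>{0..t}. {Dind \<tau> s -` A \<inter> space M | A. A \<in> sets borel})"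
    using assms by (intro UN_I[of s]) auto
  then show "Dind \<tau> s -` A \<inter> space (Hfilt M \<tau> t) \<in> sets (Hfilt M \<tau> t)"
    unfolding sets_Hfilt Hfilt_space by (rule sigma_sets.Basic)
qed simp

lemma (in prob_space) Hfilt_subalgebra:
  assumes "\<tau> \<in> borel_measurable M"
  shows "sigma_finite_subalgebra M (Hfilt M \<tau> t)"
proof -
  have "(\<Union>s\<in>{0..t}. {Dind \<tau> s -` A \<inter> space M | A. A \<in> sets borel}) \<subseteq> sets M"
    using measurable_sets[OF Dind_measurable[OF assms]] by auto
  then have "sets (Hfilt M \<tau> t) \<subseteq> sets M"
    unfolding sets_Hfilt by (rule sets.sigma_sets_subset)
  then have "finite_measure_subalgebra M (Hfilt M \<tau> t)"
    by (intro finite_measure_subalgebra.intro finite_measure_subalgebra_axioms.intro)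
       (auto simp: subalgebra_def finite_measureI)
  then show ?thesis by (rule finite_measure_subalgebra_is_sigma_finite)
qed

lemma Hfilt_set_saturated:
  assumes "A \<in> sets (Hfilt M \<tau> t)" "\<omega> \<in> space M" "\<omega>' \<in> space M"
    and "\<forall>s\<le>t. Dind \<tau> s \<omega> = Dind \<tau> s \<omega>'"
  shows "\<omega> \<in> A \<longleftrightarrow> \<omega>' \<in> A"
proof -
  have "A \<in> sigma_sets (space M) (\<Union>s\<in>{0..t}. {Dind \<tau> s -` A \<inter> space M | A. A \<in> sets borel})"
    using assms(1) sets_Hfilt by blast
  then have "\<forall>x\<in>space M. \<forall>y\<in>space M. (\<forall>s\<le>t. Dind \<tau> s x = Dind \<tau> s y) \<longrightarrow> (x \<in> A \<longleftrightarrow> y \<in> A)"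
  proof (induct rule: sigma_sets.induct)
    case (Basic a)
    then obtain s B where sB: "s \<le> t" "a = Dind \<tau> s -` B \<inter> space M" by auto
    show ?case
    proof (intro ballI impI)
      fix x y assume xy: "x \<in> space M" "y \<in> space M" "\<forall>s\<le>t. Dind \<tau> s x = Dind \<tau> s y"
      then have "Dind \<tau> s x = Dind \<tau> s y" using sB(1) by blast
      then show "x \<in> a \<longleftrightarrow> y \<in> a" using sB(2) xy(1,2) by simp
    qed
  next
    case (Compl a)
    show ?case
    proof (intro ballI impI)
      fix x y assume "x \<in> space M" "y \<in> space M" "\<forall>s\<le>t. Dind \<tau> s x = Dind \<tau> s y"
      then show "x \<in> space M - a \<longleftrightarrow> y \<in> space M - a" using Compl(2) by blast
    qed
  next
    case (Union a)
    show ?case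
    proof (intro ballI impI)
      fix x y assume "x \<in> space M" "y \<in> space M" "\<forall>s\<le>t. Dind \<tau> s x = Dind \<tau> s y"
      then have "\<And>i. x \<in> a i \<longleftrightarrow> y \<in> a i" using Union(2) by blast
      then show "x \<in> \<Union>(range a) \<longleftrightarrow> y \<in> \<Union>(range a)" by blast
    qed
  qed simp
  then show ?thesis using assms by blast
qed

lemma Hfilt_set_survivors:
  assumes "A \<in> sets (Hfilt M \<tau> m)"
  shows "{\<omega>\<in>space M. real m < \<tau> \<omega>} \<subseteq> A \<or> (\<forall>\<omega>\<in>A. \<tau> \<omega> \<le> real m)"
proof (rule disjCI)
  assume "\<not> (\<forall>\<omega>\<in>A. \<tau> \<omega> \<le> real m)"
  then obtain \<omega>0 where \<omega>0: "\<omega>0 \<in> A" "real m < \<tau> \<omega>0" by force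
  have "\<omega>0 \<in> space M" using sets.sets_into_space[OF assms] \<omega>0(1) by auto
  show "{\<omega>\<in>space M. real m < \<tau> \<omega>} \<subseteq> A"
  proof
    fix \<omega> assume \<omega>: "\<omega> \<in> {\<omega>\<in>space M. real m < \<tau> \<omega>}"
    have "\<forall>s\<le>m. Dind \<tau> s \<omega>0 = Dind \<tau> s \<omega>"
      using \<omega>0(2) \<omega> by (auto simp: Dind_def)
    then show "\<omega> \<in> A"
      using Hfilt_set_saturated[OF assms \<open>\<omega>0 \<in> space M\<close>] \<omega> \<omega>0(1) by blast
  qed
qed

section \<open>Conditioning a lifetime function on the past\<close>

lemma (in prob_space) integral_Dind:
  assumes "\<tau> \<in> borel_measurable M"
  shows "(\<integral>\<omega>. Dind \<tau> s \<omega> \<partial>M) = prob {\<omega>\<in>space M. \<tau> \<omega> \<le> real s}"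
proof -
  have "(\<integral>\<omega>. Dind \<tau> s \<omega> \<partial>M) = (\<integral>\<omega>. indicator {\<omega>\<in>space M. \<tau> \<omega> \<le> real s} \<omega> \<partial>M)"
    by (rule Bochner_Integration.integral_cong) (auto simp: Dind_def)
  also have "\<dots> = prob {\<omega>\<in>space M. \<tau> \<omega> \<le> real s}"
    using assms by (simp add: inf.absorb1)
  finally show ?thesis .
qed

lemma (in prob_space) integrable_Dind:
  assumes "\<tau> \<in> borel_measurable M"
  shows "integrable M (Dind \<tau> s)"
  by (rule integrable_const_bound[where B=1]) (auto simp: Dind_def Dind_measurable[OF assms])

text \<open>The one-period death probability in multiplicative form
  q_m P(tau > m) = P(m < tau <= m+1); unlike the quotient defining q_m,
  this holds also when P(tau > m) = 0.\<close>
lemma (in prob_space) qdeath_times_survival: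
  assumes "\<tau> \<in> borel_measurable M"
  shows "qdeath M \<tau> m * (1 - prob {\<omega>\<in>space M. \<tau> \<omega> \<le> real m})
    = prob {\<omega>\<in>space M. \<tau> \<omega> \<le> real (Suc m)} - prob {\<omega>\<in>space M. \<tau> \<omega> \<le> real m}"
proof -
  define P where "P s = prob {\<omega>\<in>space M. \<tau> \<omega> \<le> real s}" for s :: nat
  have dead_by: "{\<omega>\<in>space M. \<tau> \<omega> \<le> real s} \<in> sets M" for s :: nat
    using assms unfolding borel_measurable_iff_le by blast
  have sub: "{\<omega>\<in>space M. \<tau> \<omega> \<le> real m} \<subseteq> {\<omega>\<in>space M. \<tau> \<omega> \<le> real (Suc m)}" by auto
  have dying: "{\<omega>\<in>space M. \<tau> \<omega> \<le> real m + 1 \<and> real m < \<tau> \<omega>}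
      = {\<omega>\<in>space M. \<tau> \<omega> \<le> real (Suc m)} - {\<omega>\<in>space M. \<tau> \<omega> \<le> real m}" by auto
  have dies: "prob {\<omega>\<in>space M. \<tau> \<omega> \<le> real m + 1 \<and> real m < \<tau> \<omega>} = P (Suc m) - P m"
    unfolding dying P_def by (rule finite_measure_Diff[OF dead_by dead_by sub])
  have "{\<omega>\<in>space M. real m < \<tau> \<omega>} = space M - {\<omega>\<in>space M. \<tau> \<omega> \<le> real m}" by auto
  then have survives: "prob {\<omega>\<in>space M. real m < \<tau> \<omega>} = 1 - P m"
    unfolding P_def by (simp add: prob_compl[OF dead_by])
  have q: "qdeath M \<tau> m = (P (Suc m) - P m) / (1 - P m)"
    unfolding qdeath_def cond_prob_def using dies survives by simp
  have "P m \<le> P (Suc m)" "P (Suc m) \<le> 1"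
    unfolding P_def by (rule finite_measure_mono[OF sub dead_by], rule prob_le_1)
  then have "qdeath M \<tau> m * (1 - P m) = P (Suc m) - P m"
    unfolding q by (cases "P m = 1") auto
  then show ?thesis unfolding P_def .
qed

text \<open>Since H_m is trivial on the survivors, a payoff that vanishes unless the
  insured survives m has as conditional expectation its mean value over
  survivors, times the survival indicator.\<close>
lemma (in prob_space) cond_exp_survivor_payoff:
  assumes \<tau>: "\<tau> \<in> borel_measurable M"
    and f: "integrable M f" "\<forall>\<omega>\<in>space M. \<tau> \<omega> \<le> real m \<longrightarrow> f \<omega> = 0"
    and mean: "c * (1 - prob {\<omega>\<in>space M. \<tau> \<omega> \<le> real m}) = (\<integral>\<omega>. f \<omega> \<partial>M)"
  shows "AE \<omega> in M. real_cond_exp M (Hfilt M \<tau> m) f \<omega> = c * (1 - Dind \<tau> m \<omega>)"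
proof -
  interpret sigma_finite_subalgebra M "Hfilt M \<tau> m" using Hfilt_subalgebra[OF \<tau>] .
  define g where "g \<omega> = c * (1 - Dind \<tau> m \<omega>)" for \<omega>
  have g: "integrable M g" "g \<in> borel_measurable (Hfilt M \<tau> m)"
    unfolding g_def using integrable_Dind[OF \<tau>] Dind_measurable_Hfilt[of m m \<tau> M] by auto
  have g0: "\<forall>\<omega>\<in>space M. \<tau> \<omega> \<le> real m \<longrightarrow> g \<omega> = 0"
    by (simp add: g_def Dind_def)
  have "(\<integral>\<omega>. g \<omega> \<partial>M) = (\<integral>\<omega>. f \<omega> \<partial>M)"
    using mean by (simp add: g_def integrable_Dind[OF \<tau>] integral_Dind[OF \<tau>] prob_space)
  moreover have
    "(\<integral>\<omega>\<in>A. h \<omega> \<partial>M) = (if {\<omega>\<in>space M. real m < \<tau> \<omega>} \<subseteq> A then (\<integral>\<omega>. h \<omega> \<partial>M) else 0)"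
    if A: "A \<in> sets (Hfilt M \<tau> m)" and h0: "\<forall>\<omega>\<in>space M. \<tau> \<omega> \<le> real m \<longrightarrow> h \<omega> = 0"
    for A and h :: "'a \<Rightarrow> real"
  proof (cases "{\<omega>\<in>space M. real m < \<tau> \<omega>} \<subseteq> A")
    case True
    have "(\<integral>\<omega>. indicator A \<omega> *\<^sub>R h \<omega> \<partial>M) = (\<integral>\<omega>. h \<omega> \<partial>M)"
      using h0 True by (intro Bochner_Integration.integral_cong) (auto simp: subset_iff not_less)
    then show ?thesis using True unfolding set_lebesgue_integral_def by simp
  next
    case False
    then have "\<forall>\<omega>\<in>A. \<tau> \<omega> \<le> real m" using Hfilt_set_survivors[OF A] by blast
    then have "(\<integral>\<omega>. indicator A \<omega> *\<^sub>R h \<omega> \<partial>M) = (\<integral>\<omega>. 0 \<partial>M)"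
      using h0 sets.sets_into_space[OF A] by (intro Bochner_Integration.integral_cong) auto
    then show ?thesis using False unfolding set_lebesgue_integral_def by simp
  qed
  ultimately have "(\<integral>\<omega>\<in>A. f \<omega> \<partial>M) = (\<integral>\<omega>\<in>A. g \<omega> \<partial>M)" if "A \<in> sets (Hfilt M \<tau> m)" for A
    using that f(2) g0 by simp
  then show ?thesis
    unfolding g_def[symmetric] using real_cond_exp_charact f(1) g by blast
qed

text \<open>The conditioning step: given H_m, a lifetime function of horizon m+1
  becomes one of horizon m whose survival value is the expected value of the
  period m+1, i.e. f(m+1) q_m + c p_m.\<close>
lemma (in prob_space) cond_exp_lifetime_fun:
  assumes \<tau>: "\<tau> \<in> borel_measurable M" and pos: "\<forall>\<omega>\<in>space M. \<tau> \<omega> > 0"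
    and L: "L \<in> borel_measurable M"
    and L_eq: "AE \<omega> in M. L \<omega> = lifetime_fun (Suc m) f c (\<tau> \<omega>)"
  shows "AE \<omega> in M. real_cond_exp M (Hfilt M \<tau> m) L \<omega> =
    lifetime_fun m f (f (Suc m) * qdeath M \<tau> m + c * psurv M \<tau> m) (\<tau> \<omega>)"
proof -
  interpret sigma_finite_subalgebra M "Hfilt M \<tau> m" using Hfilt_subalgebra[OF \<tau>] .
  define D where "D s = Dind \<tau> s" for s
  define c' where "c' = f (Suc m) * qdeath M \<tau> m + c * psurv M \<tau> m"
  define P where "P s = prob {\<omega>\<in>space M. \<tau> \<omega> \<le> real s}" for s
  define past where "past \<omega> = (\<Sum>s\<in>{1..m}. f s * (D s \<omega> - D (s - 1) \<omega>))" for \<omega>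
  define future where "future \<omega> = f (Suc m) * (D (Suc m) \<omega> - D m \<omega>) + c * (1 - D (Suc m) \<omega>)" for \<omega>
  have D_int: "integrable M (D s)" for s unfolding D_def by (rule integrable_Dind[OF \<tau>])
  have past: "integrable M past" "past \<in> borel_measurable (Hfilt M \<tau> m)"
    unfolding past_def
    by (intro Bochner_Integration.integrable_sum integrable_mult_right
        Bochner_Integration.integrable_diff D_int)
       (auto intro!: borel_measurable_sum borel_measurable_times borel_measurable_diff
        Dind_measurable_Hfilt simp: D_def)
  have future: "integrable M future" unfolding future_def using D_int by auto
  have split_Suc: "lifetime_fun (Suc m) f c (\<tau> \<omega>) = past \<omega> + future \<omega>" if "\<omega> \<in> space M" for \<omega>
    using pos that
    by (simp add: lifetime_fun_indicators past_def future_def sum.cl_ivl_Suc D_def Dind_def)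
  have split_m: "lifetime_fun m f c' (\<tau> \<omega>) = past \<omega> + c' * (1 - D m \<omega>)" if "\<omega> \<in> space M" for \<omega>
    using pos that by (simp add: lifetime_fun_indicators past_def D_def Dind_def)
  have future_dead: "\<forall>\<omega>\<in>space M. \<tau> \<omega> \<le> real m \<longrightarrow> future \<omega> = 0"
    by (simp add: future_def D_def Dind_def)
  have "(\<integral>\<omega>. D s \<omega> \<partial>M) = P s" for s
    unfolding D_def P_def by (rule integral_Dind[OF \<tau>])
  then have "(\<integral>\<omega>. future \<omega> \<partial>M) = f (Suc m) * (P (Suc m) - P m) + c * (1 - P (Suc m))"
    by (simp add: future_def D_int prob_space)
  also have "\<dots> = f (Suc m) * (qdeath M \<tau> m * (1 - P m)) + c * ((1 - P m) - qdeath M \<tau> m * (1 - P m))"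
    using qdeath_times_survival[OF \<tau>, of m] unfolding P_def by simp
  also have "\<dots> = c' * (1 - P m)"
    by (simp add: c'_def psurv_def algebra_simps)
  finally have future_mean: "c' * (1 - P m) = (\<integral>\<omega>. future \<omega> \<partial>M)" ..
  have "AE \<omega> in M. real_cond_exp M (Hfilt M \<tau> m) L \<omega>
      = real_cond_exp M (Hfilt M \<tau> m) (\<lambda>\<omega>. past \<omega> + future \<omega>) \<omega>"
    using L_eq split_Suc past(1) future L
    by (intro real_cond_exp_cong) (auto elim!: AE_mp intro!: AE_I2 borel_measurable_integrable)
  moreover have "AE \<omega> in M. real_cond_exp M (Hfilt M \<tau> m) (\<lambda>\<omega>. past \<omega> + future \<omega>) \<omega>
      = real_cond_exp M (Hfilt M \<tau> m) past \<omega> + real_cond_exp M (Hfilt M \<tau> m) future \<omega>"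
    using past(1) future by (rule real_cond_exp_add)
  moreover have "AE \<omega> in M. real_cond_exp M (Hfilt M \<tau> m) past \<omega> = past \<omega>"
    using past by (rule real_cond_exp_F_meas)
  moreover have "AE \<omega> in M. real_cond_exp M (Hfilt M \<tau> m) future \<omega> = c' * (1 - D m \<omega>)"
    unfolding D_def using future future_dead future_mean[unfolded P_def]
    by (rule cond_exp_survivor_payoff[OF \<tau>])
  ultimately show ?thesis
    using AE_space unfolding c'_def[symmetric] by eventually_elim (simp add: split_m)
qed

section \<open>The backward recursions\<close>

lemma Lfun_last: "Lfun M \<tau> T \<alpha> W T = (\<lambda>\<omega>. exp (- \<alpha> T * W \<omega>))"
  by (simp add: Lfun_def)

lemma Lfun_step:
  assumes "t < T"
  shows "Lfun M \<tau> T \<alpha> W t = (\<lambda>\<omega>. real_cond_exp M (Hfilt M \<tau> t) (Lfun M \<tau> T \<alpha> W (Suc t)) \<omega>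
      powr (betaT T \<alpha> t / betaT T \<alpha> (Suc t)))"
proof -
  have "T - t = Suc (T - Suc t)" "T - (T - Suc t) = Suc t" using assms by auto
  then show ?thesis using assms by (simp add: Lfun_def)
qed

lemma hfun_last: "hfun M \<tau> T \<alpha> z T = exp (z (T + 1))"
  by (simp add: hfun_def)

lemma hfun_step:
  assumes "t < T"
  shows "hfun M \<tau> T \<alpha> z t =
    (exp (betaT T \<alpha> (Suc t) * z (Suc t)) * qdeath M \<tau> t
      + hfun M \<tau> T \<alpha> z (Suc t) powr betaT T \<alpha> (Suc t) * psurv M \<tau> t) powr (1 / betaT T \<alpha> (Suc t))"
proof -
  have "T - t = Suc (T - Suc t)" "T - (T - Suc t) = Suc t" using assms by auto
  then show ?thesis using assms by (simp add: hfun_def)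
qed

lemma betaT_last: "betaT T \<alpha> T = \<alpha> T"
  by (simp add: betaT_def)

lemma betaT_pos:
  assumes "\<forall>k\<in>{1..T}. \<alpha> k > 0" "1 \<le> t" "t \<le> T"
  shows "betaT T \<alpha> t > 0"
proof -
  have "(\<Sum>k\<in>{t..T}. 1 / \<alpha> k) > 0" using assms by (intro sum_pos) auto
  then show ?thesis by (simp add: betaT_def)
qed

lemma Lback_measurable:
  assumes "W \<in> borel_measurable M"
  shows "Lback M \<tau> T \<alpha> W n \<in> borel_measurable M"
proof (induction n)
  case 0
  show ?case using assms by simp
next
  case (Suc n)
  have [measurable]: "real_cond_exp M (Hfilt M \<tau> (T - Suc n)) (Lback M \<tau> T \<alpha> W n) \<in> borel_measurable M"
    by (rule borel_measurable_cond_exp2)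
  show ?case by simp
qed

lemma (in prob_space) Lfun_lifetime_fun:
  assumes \<tau>: "\<tau> \<in> borel_measurable M" and pos: "\<forall>\<omega>\<in>space M. \<tau> \<omega> > 0"
    and \<alpha>: "\<forall>k\<in>{1..T}. \<alpha> k > 0"
    and Z: "Z \<in> borel_measurable M" "\<forall>\<omega>\<in>space M. Z \<omega> = lifetime_fun T z (z (T + 1)) (\<tau> \<omega>)"
    and t: "1 \<le> t" "t \<le> T"
  shows "AE \<omega> in M. Lfun M \<tau> T \<alpha> (\<lambda>x. - Z x) t \<omega> =
    lifetime_fun t (\<lambda>s. exp (betaT T \<alpha> t * z s)) (hfun M \<tau> T \<alpha> z t powr betaT T \<alpha> t) (\<tau> \<omega>)"
  using t(2,1)
proof (induction t rule: inc_induct)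
  case base
  have "Lfun M \<tau> T \<alpha> (\<lambda>x. - Z x) T \<omega> =
      lifetime_fun T (\<lambda>s. exp (betaT T \<alpha> T * z s)) (hfun M \<tau> T \<alpha> z T powr betaT T \<alpha> T) (\<tau> \<omega>)"
    if "\<omega> \<in> space M" for \<omega>
    using Z(2) that
    by (simp add: Lfun_last betaT_last hfun_last exp_powr_real lifetime_fun_def mult.commute)
  then show ?case by (simp add: AE_I2)
next
  case (step t)
  define \<beta> where "\<beta> = betaT T \<alpha>"
  define h where "h = hfun M \<tau> T \<alpha> z"
  have \<beta>_pos: "\<beta> (Suc t) > 0" unfolding \<beta>_def using step.hyps by (intro betaT_pos[OF \<alpha>]) auto
  have L_meas: "Lfun M \<tau> T \<alpha> (\<lambda>x. - Z x) (Suc t) \<in> borel_measurable M"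
    unfolding Lfun_def using Z(1) by (intro Lback_measurable) simp
  have "AE \<omega> in M. real_cond_exp M (Hfilt M \<tau> t) (Lfun M \<tau> T \<alpha> (\<lambda>x. - Z x) (Suc t)) \<omega> =
      lifetime_fun t (\<lambda>s. exp (\<beta> (Suc t) * z s))
        (exp (\<beta> (Suc t) * z (Suc t)) * qdeath M \<tau> t + h (Suc t) powr \<beta> (Suc t) * psurv M \<tau> t) (\<tau> \<omega>)"
    using step.IH step.prems unfolding \<beta>_def h_def
    by (intro cond_exp_lifetime_fun[OF \<tau> pos L_meas]) auto
  then show ?case
  proof eventually_elim
    case (elim \<omega>)
    have "exp (\<beta> (Suc t) * z s) powr (\<beta> t / \<beta> (Suc t)) = exp (\<beta> t * z s)" for s
      using \<beta>_pos by (simp add: exp_powr_real)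
    moreover have "h t powr \<beta> t =
        (exp (\<beta> (Suc t) * z (Suc t)) * qdeath M \<tau> t + h (Suc t) powr \<beta> (Suc t) * psurv M \<tau> t)
          powr (\<beta> t / \<beta> (Suc t))"
      using step.hyps by (simp add: h_def \<beta>_def hfun_step powr_powr)
    ultimately show ?case
      using step.hyps by (simp add: Lfun_step elim lifetime_fun_powr \<beta>_def h_def)
  qed
qed

theorem proposition4p2:
  fixes M :: "'a measure" and \<tau> :: "'a \<Rightarrow> real" and T :: nat
    and \<alpha> :: "nat \<Rightarrow> real" and z :: "nat \<Rightarrow> real" and Z :: "'a \<Rightarrow> real"
  assumes "prob_space M"
    and "\<tau> \<in> borel_measurable M"
    and "\<forall>\<omega>\<in>space M. \<tau> \<omega> > 0"
    and "\<forall>s::real. s \<ge> 0 \<longrightarrow> measure M {\<omega>\<in>space M. \<tau> \<omega> = s} = 0"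
    and "T \<ge> 1"
    and "\<forall>k\<in>{1..T}. \<alpha> k > 0"
    and "\<forall>\<omega>. Z \<omega> = (\<Sum>t\<in>{1..T}. z t * indicator {\<omega>'. real t - 1 < \<tau> \<omega>' \<and> \<tau> \<omega>' \<le> real t} \<omega>)
                 + z (T + 1) * indicator {\<omega>'. real T < \<tau> \<omega>'} \<omega>"
  shows "(AE \<omega> in M. Lfun M \<tau> T \<alpha> (\<lambda>x. - Z x) 1 \<omega> =
            exp (betaT T \<alpha> 1 * z 1) * Dind \<tau> 1 \<omega>
            + hfun M \<tau> T \<alpha> z 1 powr betaT T \<alpha> 1 * (1 - Dind \<tau> 1 \<omega>))
       \<and> (\<forall>t\<in>{2..T}. AE \<omega> in M. Lfun M \<tau> T \<alpha> (\<lambda>x. - Z x) t \<omega> =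
            exp (betaT T \<alpha> t * (\<Sum>s\<in>{1..t-1}. (z s - z (s + 1)) * Dind \<tau> s \<omega>))
            * (exp (betaT T \<alpha> t * z t) * Dind \<tau> t \<omega>
               + hfun M \<tau> T \<alpha> z t powr betaT T \<alpha> t * (1 - Dind \<tau> t \<omega>)))"
proof -
  interpret prob_space M by (rule assms(1))
  have Z_meas: "Z \<in> borel_measurable M"
  proof -
    have "Z = (\<lambda>\<omega>. (\<Sum>t\<in>{1..T}. z t * (if real t - 1 < \<tau> \<omega> \<and> \<tau> \<omega> \<le> real t then 1 else 0))
        + z (T + 1) * (if real T < \<tau> \<omega> then 1 else 0))"
      by (rule ext) (simp add: assms(7) indicator_def of_bool_def)
    then show ?thesis using assms(2) by simp
  qed
  have Z_eq: "\<forall>\<omega>\<in>space M. Z \<omega> = lifetime_fun T z (z (T + 1)) (\<tau> \<omega>)"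
    using assms(3,7) payoff_lifetime_fun[where \<tau>=\<tau> and T=T and z=z] by simp
  have "AE \<omega> in M. Lfun M \<tau> T \<alpha> (\<lambda>x. - Z x) t \<omega> =
      exp (betaT T \<alpha> t * (\<Sum>s\<in>{1..t-1}. (z s - z (s + 1)) * Dind \<tau> s \<omega>))
      * (exp (betaT T \<alpha> t * z t) * Dind \<tau> t \<omega>
         + hfun M \<tau> T \<alpha> z t powr betaT T \<alpha> t * (1 - Dind \<tau> t \<omega>))"
    if "1 \<le> t" "t \<le> T" for t
    using Lfun_lifetime_fun[OF assms(2,3,6) Z_meas Z_eq that] AE_space
    by eventually_elim (use assms(3) that in \<open>simp add: lifetime_fun_exp_factorization Dind_def\<close>)
  from this[of 1] this assms(5) show ?thesis by simp
qed

end
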